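(* Let $T$ be a light tournament, $z\in V(T)$, and $i\ge 3$. Suppose there are vertices $z_{i-1},z'_{i-1}\in V_{i-1}(z)$ (possibly equal) such that every $s\in V_i(z)$ has an arc $(s,z_{i-1})$ or $(s,z'_{i-1})$ in $T$. Then $U:=N(z_{i-1})\cap V_i(z)$ and $S:=V_i(z)\setminus U$ both induce triangle-free (hence acyclic) subtournaments of $T$.
   Context: A triangle of a tournament is a set of three vertices inducing a directed 3-cycle. An unordered pair $ab$ of vertices is a diagonal if there exist vertices $u,v$ with $\{u,v,a\}$ and $\{u,v,b\}$ both triangles. A triangle is heavy if at least two of its pairs are diagonals; a tournament is light if it has no heavy triangle. For $S\subseteq V(T)$, the in-neighborhood is $N(S)=\{v\notin S: (v,u)\in A(T)\text{ for some }u\in S\}$, and $N(u)=N(\{u\})$. For $z\in V(T)$: $V_1(z)=\{z\}$ and $V_{j+1}(z)=N\big(\bigcup_{k\le j}V_k(z)\big)$ for $j\ge1$; thus $V_j(z)$ is the set of vertices whose shortest directed path to $z$ has length exactly $j-1$. *)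

theory Defs
  imports Main
begin

text \<open>A (finite) tournament on vertex set V with arc relation A (A u v means arc (u,v)).\<close>
definition tournament :: "'a set \<Rightarrow> ('a \<Rightarrow> 'a \<Rightarrow> bool) \<Rightarrow> bool" where
  "tournament V A \<longleftrightarrow> finite V \<and>
     (\<forall>u\<in>V. \<forall>v\<in>V. A u v \<longrightarrow> u \<noteq> v) \<and>
     (\<forall>u\<in>V. \<forall>v\<in>V. u \<noteq> v \<longrightarrow> (A u v \<longleftrightarrow> \<not> A v u))"

definition is_triangle :: "'a set \<Rightarrow> ('a \<Rightarrow> 'a \<Rightarrow> bool) \<Rightarrow> 'a \<Rightarrow> 'a \<Rightarrow> 'a \<Rightarrow> bool" where
  "is_triangle V A a b c \<longleftrightarrow> a \<in> V \<and> b \<in> V \<and> c \<in> V \<and>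
     a \<noteq> b \<and> b \<noteq> c \<and> a \<noteq> c \<and>
     ((A a b \<and> A b c \<and> A c a) \<or> (A b a \<and> A c b \<and> A a c))"

definition diagonal :: "'a set \<Rightarrow> ('a \<Rightarrow> 'a \<Rightarrow> bool) \<Rightarrow> 'a \<Rightarrow> 'a \<Rightarrow> bool" where
  "diagonal V A a b \<longleftrightarrow> a \<in> V \<and> b \<in> V \<and> a \<noteq> b \<and>
     (\<exists>u\<in>V. \<exists>v\<in>V. is_triangle V A u v a \<and> is_triangle V A u v b)"

definition heavy :: "'a set \<Rightarrow> ('a \<Rightarrow> 'a \<Rightarrow> bool) \<Rightarrow> 'a \<Rightarrow> 'a \<Rightarrow> 'a \<Rightarrow> bool" where
  "heavy V A a b c \<longleftrightarrow> is_triangle V A a b c \<and>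
     ((diagonal V A a b \<and> diagonal V A b c) \<or> (diagonal V A a b \<and> diagonal V A a c)
      \<or> (diagonal V A b c \<and> diagonal V A a c))"

definition light :: "'a set \<Rightarrow> ('a \<Rightarrow> 'a \<Rightarrow> bool) \<Rightarrow> bool" where
  "light V A \<longleftrightarrow> tournament V A \<and> \<not> (\<exists>a b c. heavy V A a b c)"

definition innbhd :: "'a set \<Rightarrow> ('a \<Rightarrow> 'a \<Rightarrow> bool) \<Rightarrow> 'a set \<Rightarrow> 'a set" where
  "innbhd V A S = {v \<in> V. v \<notin> S \<and> (\<exists>u\<in>S. A v u)}"

fun cumV :: "'a set \<Rightarrow> ('a \<Rightarrow> 'a \<Rightarrow> bool) \<Rightarrow> 'a \<Rightarrow> nat \<Rightarrow> 'a set" where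
  "cumV V A z 0 = {}"
| "cumV V A z (Suc 0) = {z}"
| "cumV V A z (Suc (Suc j)) = cumV V A z (Suc j) \<union> innbhd V A (cumV V A z (Suc j))"

text \<open>V_j(z): V_1(z) = {z}, V_{j+1}(z) = N(V_1(z) \<union> ... \<union> V_j(z)); V_0 is empty (unused).\<close>
fun Vlev :: "'a set \<Rightarrow> ('a \<Rightarrow> 'a \<Rightarrow> bool) \<Rightarrow> 'a \<Rightarrow> nat \<Rightarrow> 'a set" where
  "Vlev V A z 0 = {}"
| "Vlev V A z (Suc 0) = {z}"
| "Vlev V A z (Suc (Suc j)) = innbhd V A (cumV V A z (Suc j))"

definition triangle_free_on :: "'a set \<Rightarrow> ('a \<Rightarrow> 'a \<Rightarrow> bool) \<Rightarrow> 'a set \<Rightarrow> bool" where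
  "triangle_free_on V A X \<longleftrightarrow>
     \<not> (\<exists>a\<in>X. \<exists>b\<in>X. \<exists>c\<in>X. is_triangle V A a b c)"

end

theory Submission
  imports Defs
begin

text \<open>Fix \<open>x \<in> V\<^sub>i\<^sub>-\<^sub>1(z)\<close>. It has an out-neighbour \<open>w\<close> at distance at most \<open>i - 3\<close> from \<open>z\<close>,
  and every vertex of \<open>V\<^sub>i(z)\<close> is dominated by \<open>w\<close>, since otherwise it would lie at
  distance at most \<open>i - 2\<close>. Hence \<open>x w s\<close> is a triangle for every \<open>s \<in> V\<^sub>i(z)\<close> with
  \<open>s \<rightarrow> x\<close>, so any two such vertices form a diagonal, and a triangle among them
  would be heavy. Both \<open>U\<close> and \<open>S\<close> consist of such vertices, for \<open>x = z\<^sub>i\<^sub>-\<^sub>1\<close>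
  and \<open>x = z'\<^sub>i\<^sub>-\<^sub>1\<close> respectively.\<close>

lemma light_triangle_free_on_common_pair:
  assumes "light V A" and "\<forall>s\<in>X. is_triangle V A u v s"
  shows "triangle_free_on V A X"
  unfolding triangle_free_on_def
proof clarify
  fix a b c assume abc: "a \<in> X" "b \<in> X" "c \<in> X" "is_triangle V A a b c"
  have "diagonal V A p q" if "p \<in> X" "q \<in> X" "p \<noteq> q" for p q
    using assms(2) that unfolding diagonal_def is_triangle_def by blast
  with abc have "heavy V A a b c"
    unfolding heavy_def by (simp add: is_triangle_def)
  with assms(1) show False
    by (auto simp: light_def)
qed

lemma cumV_subset: "z \<in> V \<Longrightarrow> cumV V A z n \<subseteq> V"
  by (induction V A z n rule: cumV.induct) (auto simp: innbhd_def)

lemma Vlev_subset: "z \<in> V \<Longrightarrow> Vlev V A z n \<subseteq> V"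
  by (cases "(V, A, z, n)" rule: Vlev.cases) (auto simp: innbhd_def)

lemma Vlev_dominated_by_earlier_out_nbr:
  assumes "tournament V A" "z \<in> V" "x \<in> Vlev V A z (Suc (Suc k))"
  obtains w where "w \<in> V" "A x w" "\<forall>s\<in>Vlev V A z (Suc (Suc (Suc k))). A w s"
proof -
  obtain w where w: "w \<in> cumV V A z (Suc k)" "A x w"
    using assms(3) by (auto simp: innbhd_def)
  have wV: "w \<in> V"
    using w(1) cumV_subset[OF assms(2)] by blast
  have "A w s" if s: "s \<in> Vlev V A z (Suc (Suc (Suc k)))" for s
  proof -
    have "s \<in> V" "s \<notin> cumV V A z (Suc k) \<union> innbhd V A (cumV V A z (Suc k))"
      using s by (auto simp: innbhd_def)
    then have "s \<noteq> w" "\<not> A s w"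
      using w(1) wV by (auto simp: innbhd_def)
    with \<open>s \<in> V\<close> wV assms(1) show "A w s"
      unfolding tournament_def by blast
  qed
  with wV w(2) show thesis
    using that by blast
qed

lemma triangle_free_on_in_nbrs_in_next_level:
  assumes L: "light V A" and z: "z \<in> V" and i: "3 \<le> i"
    and x: "x \<in> Vlev V A z (i - 1)"
    and X: "X \<subseteq> Vlev V A z i" and to_x: "\<forall>s\<in>X. A s x"
  shows "triangle_free_on V A X"
proof -
  have T: "tournament V A"
    using L by (simp add: light_def)
  define k where "k = i - 3"
  have k: "i = Suc (Suc (Suc k))"
    using i k_def by arith
  obtain w where w: "w \<in> V" "A x w" "\<forall>s\<in>Vlev V A z i. A w s"
    using Vlev_dominated_by_earlier_out_nbr[OF T z, of x k] x k by auto
  have "is_triangle V A x w s" if "s \<in> X" for s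
  proof -
    have "x \<in> V" "s \<in> V"
      using x X that Vlev_subset[OF z] by blast+
    with T w that X to_x show ?thesis
      unfolding is_triangle_def tournament_def by blast
  qed
  with L show ?thesis
    by (blast intro: light_triangle_free_on_common_pair)
qed

theorem lemma4:
  fixes V :: "'a set" and A :: "'a \<Rightarrow> 'a \<Rightarrow> bool" and z y y' :: 'a and i :: nat
  assumes "light V A"
    and "z \<in> V"
    and "i \<ge> 3"
    and "y \<in> Vlev V A z (i - 1)" and "y' \<in> Vlev V A z (i - 1)"
    and "\<forall>s\<in>Vlev V A z i. A s y \<or> A s y'"
  shows "triangle_free_on V A (innbhd V A {y} \<inter> Vlev V A z i)
       \<and> triangle_free_on V A (Vlev V A z i - (innbhd V A {y} \<inter> Vlev V A z i))"
proof
  show "triangle_free_on V A (innbhd V A {y} \<inter> Vlev V A z i)"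
    by (rule triangle_free_on_in_nbrs_in_next_level[OF assms(1-4)]) (auto simp: innbhd_def)
  have "A s y'" if "s \<in> Vlev V A z i - innbhd V A {y}" for s
    using that assms(6) Vlev_subset[OF assms(2), of A i] assms(1)
    by (auto simp: innbhd_def light_def tournament_def)
  then show "triangle_free_on V A (Vlev V A z i - (innbhd V A {y} \<inter> Vlev V A z i))"
    by (intro triangle_free_on_in_nbrs_in_next_level[OF assms(1-3,5)]) auto
qed

end
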